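(* Let $T$ be a tree with exactly three pendant vertices $u_1,u_2,u_3$, and let $m$ be its major vertex, with $d(u_1,m)\equiv d(u_2,m)\equiv 1\pmod 3$. Then $1$ is an eigenvalue of $L(T)$.
   Context: $L(T)=D(T)-A(T)$ is the Laplacian matrix of the tree $T$. A pendant vertex has degree $1$; a major vertex has degree at least $3$ (a tree with exactly three pendant vertices has exactly one major vertex). $d$ denotes distance. *)

theory Defs
  imports "Jordan_Normal_Form.Char_Poly"
begin

definition simple_graph :: "nat \<Rightarrow> (nat \<Rightarrow> nat \<Rightarrow> bool) \<Rightarrow> bool" where
  "simple_graph n E \<longleftrightarrow> (\<forall>i j. E i j \<longrightarrow> i < n \<and> j < n \<and> i \<noteq> j \<and> E j i)"

definition degree :: "nat \<Rightarrow> (nat \<Rightarrow> nat \<Rightarrow> bool) \<Rightarrow> nat \<Rightarrow> nat" where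
  "degree n E v = card {u. u < n \<and> E v u}"

text \<open>A walk is a nonempty list of vertices with consecutive vertices adjacent;
  its length (number of edges) is length - 1.\<close>
definition is_walk :: "nat \<Rightarrow> (nat \<Rightarrow> nat \<Rightarrow> bool) \<Rightarrow> nat list \<Rightarrow> bool" where
  "is_walk n E p \<longleftrightarrow> p \<noteq> [] \<and> (\<forall>v\<in>set p. v < n) \<and>
     (\<forall>i. Suc i < length p \<longrightarrow> E (p ! i) (p ! Suc i))"

definition connected_graph :: "nat \<Rightarrow> (nat \<Rightarrow> nat \<Rightarrow> bool) \<Rightarrow> bool" where
  "connected_graph n E \<longleftrightarrow>
     (\<forall>u v. u < n \<longrightarrow> v < n \<longrightarrow> (\<exists>p. is_walk n E p \<and> hd p = u \<and> last p = v))"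

definition is_cycle :: "nat \<Rightarrow> (nat \<Rightarrow> nat \<Rightarrow> bool) \<Rightarrow> nat list \<Rightarrow> bool" where
  "is_cycle n E c \<longleftrightarrow> is_walk n E c \<and> length c \<ge> 3 \<and> distinct c \<and> E (last c) (hd c)"

definition is_tree :: "nat \<Rightarrow> (nat \<Rightarrow> nat \<Rightarrow> bool) \<Rightarrow> bool" where
  "is_tree n E \<longleftrightarrow> simple_graph n E \<and> n \<ge> 1 \<and> connected_graph n E \<and> (\<nexists>c. is_cycle n E c)"

definition dist_graph :: "nat \<Rightarrow> (nat \<Rightarrow> nat \<Rightarrow> bool) \<Rightarrow> nat \<Rightarrow> nat \<Rightarrow> nat" where
  "dist_graph n E u v = (LEAST k. \<exists>p. is_walk n E p \<and> hd p = u \<and> last p = v \<and> length p = Suc k)"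

definition pendant :: "nat \<Rightarrow> (nat \<Rightarrow> nat \<Rightarrow> bool) \<Rightarrow> nat \<Rightarrow> bool" where
  "pendant n E v \<longleftrightarrow> v < n \<and> degree n E v = 1"

definition major :: "nat \<Rightarrow> (nat \<Rightarrow> nat \<Rightarrow> bool) \<Rightarrow> nat \<Rightarrow> bool" where
  "major n E v \<longleftrightarrow> v < n \<and> degree n E v \<ge> 3"

definition laplacian :: "nat \<Rightarrow> (nat \<Rightarrow> nat \<Rightarrow> bool) \<Rightarrow> real mat" where
  "laplacian n E = mat n n (\<lambda>(i, j). of_nat (if i = j then degree n E i else 0)
                                     - (if E i j then 1 else 0))"

end

theory Submission
  imports Defs
begin

(* Let P be a shortest path from u1 to u2. By the handshake identity (the degrees of a tree sum
   to 2(n - 1)), a tree with three leaves has no vertex of degree at least 3 other than m. Hence m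
   is the only vertex of P with neighbours off P, and by connectivity P passes through m, at
   position d(u1, m). Put x = w(k) at the k-th vertex of P and x = 0 elsewhere, where w is the
   6-periodic sequence 1, 0, -1, -1, 0, 1. It satisfies w(k + 1) = w(k) - w(k - 1), which is the
   equation (L x)_v = x_v at a vertex of P of degree 2, and w(k) = 0 for k = 1 mod 3. The
   hypotheses make w vanish at m and at the neighbours of both ends of P (as d(u1, u2) = 2 mod 3),
   which gives the remaining equations on P; a vertex off P sees only x_m = 0. *)

definition neighbours :: "nat \<Rightarrow> (nat \<Rightarrow> nat \<Rightarrow> bool) \<Rightarrow> nat \<Rightarrow> nat set" where
  "neighbours n E v = {u. u < n \<and> E v u}"

lemma finite_neighbours [simp]: "finite (neighbours n E v)"
  unfolding neighbours_def by simp

lemma degree_eq_card_neighbours: "degree n E v = card (neighbours n E v)"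
  unfolding degree_def neighbours_def ..

lemma neighbours_leaf: "degree n E u = 1 \<Longrightarrow> w \<in> neighbours n E u \<Longrightarrow> neighbours n E u = {w}"
  unfolding degree_eq_card_neighbours by (metis card_1_singletonE singletonD)

lemma in_set_drop_conv_nth:
  "x \<in> set (drop k xs) \<longleftrightarrow> (\<exists>j. k \<le> j \<and> j < length xs \<and> xs ! j = x)"
proof
  assume "x \<in> set (drop k xs)"
  then obtain t where "t < length xs - k" "xs ! (k + t) = x"
    by (auto simp: in_set_conv_nth)
  then show "\<exists>j. k \<le> j \<and> j < length xs \<and> xs ! j = x"
    by (intro exI[of _ "k + t"]) auto
next
  assume "\<exists>j. k \<le> j \<and> j < length xs \<and> xs ! j = x"
  then obtain j where "k \<le> j" "j < length xs" "xs ! j = x"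
    by blast
  then have "j - k < length (drop k xs)" "drop k xs ! (j - k) = x"
    by auto
  then show "x \<in> set (drop k xs)"
    by (metis nth_mem)
qed

lemma card_filter_eq_sum:
  "finite A \<Longrightarrow> card {x \<in> A. P x} = (\<Sum>x\<in>A. if P x then 1 else 0)"
  unfolding card_eq_sum by (rule sum.inter_filter)

lemma is_walk_iff_successively:
  "is_walk n E p \<longleftrightarrow> p \<noteq> [] \<and> set p \<subseteq> {..<n} \<and> successively E p"
  unfolding is_walk_def successively_conv_nth by auto

lemma is_walk_take: "is_walk n E p \<Longrightarrow> 0 < j \<Longrightarrow> is_walk n E (take j p)"
  unfolding is_walk_def by (auto dest: in_set_takeD)

lemma is_walk_drop: "is_walk n E p \<Longrightarrow> j < length p \<Longrightarrow> is_walk n E (drop j p)"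
  unfolding is_walk_def by (auto dest: in_set_dropD)

lemma is_walk_append_tl:
  assumes "is_walk n E p" "is_walk n E q" "last p = hd q"
  shows "is_walk n E (p @ tl q)"
  using assms unfolding is_walk_iff_successively
  by (cases q) (auto simp: successively_append_iff successively_Cons dest: list.set_sel(2))

lemma set_walk_subset_closed:
  assumes "is_walk n E w" "hd w \<in> S" and closed: "\<And>v u. v \<in> S \<Longrightarrow> E v u \<Longrightarrow> u \<in> S"
  shows "set w \<subseteq> S"
proof -
  have "w ! i \<in> S" if "i < length w" for i
    using that
  proof (induction i)
    case 0
    then show ?case using assms(2) by (simp add: hd_conv_nth)
  next
    case (Suc i)
    then show ?case using closed assms(1) unfolding is_walk_def by simp
  qed
  then show ?thesis by (auto simp: in_set_conv_nth)
qed

lemma is_cycle_join: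
  assumes walks: "is_walk n E p" "is_walk n E q" and "set c \<subseteq> {..<n}"
    and sym: "\<And>u v. E u v \<Longrightarrow> E v u"
    and "distinct (p @ c @ q)" and "3 \<le> length p + length c + length q"
    and join: "successively E (last p # c @ [last q])" and close: "E (hd q) (hd p)"
  shows "is_cycle n E (p @ c @ rev q)"
proof -
  obtain x ys where q: "rev q = x # ys"
    using walks(2) unfolding is_walk_def by (cases "rev q") auto
  have "successively E (rev q)"
    using walks(2) unfolding is_walk_iff_successively by (auto intro: successively_mono sym)
  then have "successively E ((last p # c) @ rev q)"
    using join q successively_append_iff[of E "last p # c" "[x]"]
      successively_append_iff[of E "last p # c" "rev q"]
    by (simp add: hd_rev[symmetric])
  then have "successively E (p @ c @ rev q)"
    using walks(1) unfolding is_walk_iff_successively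
    by (auto simp: successively_append_iff successively_Cons)
  moreover have "E (last (p @ c @ rev q)) (hd (p @ c @ rev q))"
    using close walks unfolding is_walk_def by (simp add: last_rev)
  ultimately show ?thesis
    using assms unfolding is_cycle_def is_walk_iff_successively by auto
qed

section \<open>Distances in connected graphs\<close>

locale connected_simple_graph =
  fixes n :: nat and E :: "nat \<Rightarrow> nat \<Rightarrow> bool"
  assumes simple: "simple_graph n E" and connected: "connected_graph n E"
begin

abbreviation d :: "nat \<Rightarrow> nat \<Rightarrow> nat" where
  "d \<equiv> dist_graph n E"

lemma adj_less: "E u v \<Longrightarrow> u < n" "E u v \<Longrightarrow> v < n"
  using simple unfolding simple_graph_def by blast+

lemma adj_sym: "E u v \<Longrightarrow> E v u"
  using simple unfolding simple_graph_def by blast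

lemma adj_neq: "E u v \<Longrightarrow> u \<noteq> v"
  using simple unfolding simple_graph_def by blast

lemma is_walk_rev: "is_walk n E p \<Longrightarrow> is_walk n E (rev p)"
  unfolding is_walk_iff_successively by (auto intro: successively_mono adj_sym)

lemma dist_le_walk:
  assumes "is_walk n E p"
  shows "d (hd p) (last p) \<le> length p - 1"
proof -
  have "length p = Suc (length p - 1)"
    using assms unfolding is_walk_def by (cases p) auto
  with assms show ?thesis
    unfolding dist_graph_def by (intro Least_le) metis
qed

lemma shortest_walk_ex:
  assumes "u < n" "v < n"
  obtains p where "is_walk n E p" "hd p = u" "last p = v" "length p = Suc (d u v)"
proof -
  obtain p where p: "is_walk n E p" "hd p = u" "last p = v"
    using connected assms unfolding connected_graph_def by blast
  then have "length p = Suc (length p - 1)"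
    unfolding is_walk_def by (cases p) auto
  with p have "\<exists>k p. is_walk n E p \<and> hd p = u \<and> last p = v \<and> length p = Suc k"
    by blast
  then have "\<exists>p. is_walk n E p \<and> hd p = u \<and> last p = v \<and> length p = Suc (d u v)"
    unfolding dist_graph_def by (rule LeastI_ex)
  then show ?thesis
    using that by blast
qed

lemma dist_self: "u < n \<Longrightarrow> d u u = 0"
  using dist_le_walk[of "[u]"] unfolding is_walk_def by simp

lemma dist_eq_0:
  assumes "u < n" "v < n" "d u v = 0"
  shows "u = v"
proof -
  obtain p where "hd p = u" "last p = v" "length p = Suc 0"
    using shortest_walk_ex[OF assms(1,2)] assms(3) by metis
  then show ?thesis
    by (auto simp: length_Suc_conv)
qed

lemma dist_sym_le:
  assumes "u < n" "v < n"
  shows "d v u \<le> d u v"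
proof -
  obtain p where "is_walk n E p" "hd p = u" "last p = v" "length p = Suc (d u v)"
    using shortest_walk_ex assms by blast
  then show ?thesis
    using dist_le_walk[OF is_walk_rev] by (fastforce simp: hd_rev last_rev)
qed

lemma dist_sym: "u < n \<Longrightarrow> v < n \<Longrightarrow> d u v = d v u"
  using dist_sym_le le_antisym by blast

lemma dist_triangle:
  assumes "u < n" "v < n" "w < n"
  shows "d u w \<le> d u v + d v w"
proof -
  obtain p where p: "is_walk n E p" "hd p = u" "last p = v" "length p = Suc (d u v)"
    using shortest_walk_ex assms by blast
  obtain q where q: "is_walk n E q" "hd q = v" "last q = w" "length q = Suc (d v w)"
    using shortest_walk_ex assms by blast
  have "p \<noteq> []" "q \<noteq> []"
    using p(1) q(1) unfolding is_walk_def by auto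
  then have "hd (p @ tl q) = u" "length (p @ tl q) - 1 = d u v + d v w"
    using p(2,4) q(4) by auto
  moreover have "last (p @ tl q) = w"
  proof (cases "tl q = []")
    case True
    then have "q = [v]"
      using q(2) \<open>q \<noteq> []\<close> by (cases q) auto
    then show ?thesis
      using True p(3) q(3) by simp
  next
    case False
    then show ?thesis
      using q(3) by (simp add: last_tl)
  qed
  ultimately show ?thesis
    using dist_le_walk[OF is_walk_append_tl[OF p(1) q(1) trans[OF p(3) q(2)[symmetric]]]]
    by simp
qed

lemma dist_adj_le:
  assumes "u < n" "E v w"
  shows "d u w \<le> d u v + 1"
proof -
  have "is_walk n E [v, w]"
    using assms(2) adj_less unfolding is_walk_def by (auto simp: less_Suc_eq)
  then have "d v w \<le> 1"
    using dist_le_walk by fastforce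
  then show ?thesis
    using dist_triangle[of u v w] assms adj_less by force
qed

lemma degree_pos:
  assumes "1 < n" "v < n"
  shows "0 < degree n E v"
proof -
  define w :: nat where "w = (if v = 0 then 1 else 0)"
  have w: "w < n" "w \<noteq> v"
    unfolding w_def using assms by auto
  obtain p where p: "is_walk n E p" "hd p = v" "last p = w"
    using connected assms w unfolding connected_graph_def by blast
  then obtain u p' where "p = v # u # p'"
    using w unfolding is_walk_def by (cases p rule: remdups_adj.cases) auto
  then have "E v u"
    using p(1) unfolding is_walk_def by force
  then have "u \<in> neighbours n E v"
    unfolding neighbours_def using adj_less by blast
  then show ?thesis
    unfolding degree_eq_card_neighbours by (auto simp: card_gt_0_iff)
qed

definition geodesic :: "nat list \<Rightarrow> bool" where
  "geodesic p \<longleftrightarrow> is_walk n E p \<and> length p = Suc (d (hd p) (last p))"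

lemma geodesic_ex:
  assumes "u < n" "v < n"
  obtains p where "geodesic p" "hd p = u" "last p = v"
  using shortest_walk_ex[OF assms] unfolding geodesic_def by metis

lemma geodesic_dist_nth:
  assumes p: "geodesic p" and i: "i < length p"
  shows "d (hd p) (p ! i) = i"
proof -
  have walk: "is_walk n E p" and len: "length p = Suc (d (hd p) (last p))"
    using p unfolding geodesic_def by auto
  then have bounded: "hd p < n" "p ! i < n" "last p < n"
    using i unfolding is_walk_def by auto
  have "hd (take (Suc i) p) = hd p"
    using i by (cases p) auto
  moreover have "last (take (Suc i) p) = p ! i"
    using i by (simp add: take_Suc_conv_app_nth)
  ultimately have "d (hd p) (p ! i) \<le> i"
    using dist_le_walk[OF is_walk_take[OF walk, of "Suc i"]] i by simp
  moreover have "d (p ! i) (last p) \<le> length p - 1 - i"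
    using dist_le_walk[OF is_walk_drop[OF walk i]] i by (simp add: hd_drop_conv_nth)
  moreover have "d (hd p) (last p) \<le> d (hd p) (p ! i) + d (p ! i) (last p)"
    using dist_triangle bounded by blast
  ultimately show ?thesis
    using len i by linarith
qed

lemma geodesic_distinct:
  assumes "geodesic p"
  shows "distinct p"
  unfolding distinct_conv_nth using geodesic_dist_nth[OF assms] by metis

lemma geodesic_dist_le:
  assumes "geodesic p" "x \<in> set p"
  shows "d (hd p) x < length p"
  using assms geodesic_dist_nth by (auto simp: in_set_conv_nth)

lemma geodesic_last_common_vertex:
  assumes P: "geodesic P" "hd P = r" and Q: "geodesic Q" "hd Q = r"
    and same_length: "length P = length Q" and ends: "last P \<noteq> last Q"
  obtains i where "Suc i < length P" "P ! i = Q ! i"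
    "set (drop i P) \<inter> set (drop (Suc i) Q) = {}"
proof -
  have nonempty: "P \<noteq> []" "Q \<noteq> []"
    using P(1) Q(1) unfolding geodesic_def is_walk_def by auto
  define I where "I = {i. i < length P \<and> P ! i = Q ! i}"
  have "0 \<in> I"
    unfolding I_def using nonempty P(2) Q(2) by (simp add: hd_conv_nth)
  define i where "i = Max I"
  have "finite I"
    unfolding I_def by simp
  then have i: "i \<in> I" and i_max: "\<And>j. j \<in> I \<Longrightarrow> j \<le> i"
    unfolding i_def using \<open>0 \<in> I\<close> Max_in by auto
  have "Suc i < length P"
  proof (rule Suc_lessI)
    show "i < length P"
      using i unfolding I_def by simp
    show "Suc i \<noteq> length P"
    proof
      assume "Suc i = length P"
      then have "i = length P - 1"
        by simp
      then have "P ! i = last P" "Q ! i = last Q"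
        using nonempty same_length by (auto simp: last_conv_nth)
      then show False
        using i ends unfolding I_def by simp
    qed
  qed
  moreover have "x \<notin> set (drop (Suc i) Q)" if x: "x \<in> set (drop i P)" for x
  proof
    assume "x \<in> set (drop (Suc i) Q)"
    then obtain j where j: "Suc i \<le> j" "j < length Q" "Q ! j = x"
      by (auto simp: in_set_drop_conv_nth)
    obtain j' where j': "i \<le> j'" "j' < length P" "P ! j' = x"
      using x by (auto simp: in_set_drop_conv_nth)
    have "j = j'"
      using geodesic_dist_nth[OF P(1) j'(2)] geodesic_dist_nth[OF Q(1) j(2)] P(2) Q(2) j(3) j'(3)
      by simp
    then have "j \<in> I"
      unfolding I_def using j j' by simp
    then show False
      using i_max j(1) by fastforce
  qed
  ultimately show ?thesis
    using that i unfolding I_def by blast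
qed

end

section \<open>Trees\<close>

locale tree_graph = connected_simple_graph +
  assumes acyclic: "\<not> is_cycle n E c"
begin

(* Cutting P and Q at their last common vertex and closing up through c gives a cycle. *)
lemma geodesics_not_joinable:
  assumes P: "geodesic P" "hd P = r" and Q: "geodesic Q" "hd Q = r"
    and same_length: "length P = length Q" and ends: "last P \<noteq> last Q"
    and c: "set c \<subseteq> {..<n}" "distinct c" "set c \<inter> (set P \<union> set Q) = {}"
    and join: "successively E (last P # c @ [last Q])"
  shows False
proof -
  obtain i where i: "Suc i < length P" "P ! i = Q ! i"
    and disjoint: "set (drop i P) \<inter> set (drop (Suc i) Q) = {}"
    using geodesic_last_common_vertex[OF P Q same_length ends] by blast
  let ?p = "drop i P" and ?q = "drop (Suc i) Q"
  have "is_walk n E ?p" "is_walk n E ?q"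
    using P(1) Q(1) i(1) same_length unfolding geodesic_def by (auto intro: is_walk_drop)
  moreover have "distinct (?p @ c @ ?q)"
    using geodesic_distinct[OF P(1)] geodesic_distinct[OF Q(1)] c disjoint
    by (auto dest: in_set_dropD)
  moreover have "last ?p = last P" "last ?q = last Q"
    using i(1) same_length by auto
  moreover have "E (Q ! i) (Q ! Suc i)"
    using Q(1) i(1) same_length unfolding geodesic_def is_walk_def by simp
  then have "E (hd ?q) (hd ?p)"
    using i same_length by (simp add: hd_drop_conv_nth adj_sym)
  moreover have "3 \<le> length ?p + length c + length ?q"
    using i(1) same_length by simp
  ultimately have "is_cycle n E (?p @ c @ rev ?q)"
    using is_cycle_join c(1) join adj_sym by metis
  then show False
    using acyclic by blast
qed

lemma dist_adj_neq:
  assumes "r < n" "E v w"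
  shows "d r v \<noteq> d r w"
proof
  assume eq: "d r v = d r w"
  obtain P where P: "geodesic P" "hd P = r" "last P = v"
    using geodesic_ex assms adj_less by metis
  obtain Q where Q: "geodesic Q" "hd Q = r" "last Q = w"
    using geodesic_ex assms adj_less by metis
  have "length P = length Q"
    using P Q eq unfolding geodesic_def by simp
  then show False
    using geodesics_not_joinable[OF P(1,2) Q(1,2), of "[]"] P(3) Q(3) assms(2) adj_neq by auto
qed

lemma parent_unique:
  assumes "r < n" "E v w1" "E v w2" "d r w1 + 1 = d r v" "d r w2 + 1 = d r v"
  shows "w1 = w2"
proof (rule ccontr)
  assume "w1 \<noteq> w2"
  obtain P where P: "geodesic P" "hd P = r" "last P = w1"
    using geodesic_ex assms adj_less by metis
  obtain Q where Q: "geodesic Q" "hd Q = r" "last Q = w2"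
    using geodesic_ex assms adj_less by metis
  have lengths: "length P = d r v" "length Q = d r v"
    using P Q assms(4,5) unfolding geodesic_def by simp_all
  then have "v \<notin> set P" "v \<notin> set Q"
    using geodesic_dist_le P(1,2) Q(1,2) by fastforce+
  then show False
    using geodesics_not_joinable[OF P(1,2) Q(1,2), of "[v]"] lengths P(3) Q(3) \<open>w1 \<noteq> w2\<close>
      assms(2,3) adj_less adj_sym by auto
qed

lemma parent_exists:
  assumes "r < n" "v < n" "v \<noteq> r"
  obtains w where "E v w" "d r w + 1 = d r v"
proof -
  obtain P where P: "geodesic P" "hd P = r" "last P = v"
    using geodesic_ex assms by metis
  have "d r v \<noteq> 0"
    using dist_eq_0 assms by blast
  then obtain k where k: "d r v = Suc k"
    by (cases "d r v") auto
  then have len: "length P = Suc (Suc k)"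
    using P unfolding geodesic_def by simp
  then have "E (P ! k) (P ! Suc k)"
    using P(1) unfolding geodesic_def is_walk_def by simp
  moreover have "P ! Suc k = v"
    using P(3) len last_conv_nth[of P] by force
  moreover have "d r (P ! k) = k"
    using geodesic_dist_nth[OF P(1)] P(2) len by simp
  ultimately show ?thesis
    using that k adj_sym by auto
qed

lemma card_lower_neighbours:
  assumes "r < n" "v < n"
  shows "card {u \<in> neighbours n E v. d r u < d r v} = (if v = r then 0 else 1)"
proof (cases "v = r")
  case True
  then show ?thesis
    using dist_self assms by simp
next
  case False
  obtain w where w: "E v w" "d r w + 1 = d r v"
    using parent_exists assms False by blast
  have "{u \<in> neighbours n E v. d r u < d r v} = {w}"
  proof safe
    fix u
    assume u: "u \<in> neighbours n E v" "d r u < d r v"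
    then have "d r v \<le> d r u + 1"
      using dist_adj_le assms(1) adj_sym unfolding neighbours_def by blast
    then show "u = w"
      using parent_unique[OF assms(1) _ w(1) _ w(2)] u unfolding neighbours_def by simp
  qed (use w adj_less in \<open>auto simp: neighbours_def\<close>)
  then show ?thesis
    using False by simp
qed

lemma degree_sum: "(\<Sum>v<n. degree n E v) = 2 * (n - 1)"
proof (cases "n = 0")
  case False
  define r :: nat where "r = 0"
  have r: "r < n"
    using False unfolding r_def by simp
  define lower :: "nat \<Rightarrow> nat \<Rightarrow> nat" where
    "lower v u = (if E v u \<and> d r u < d r v then 1 else 0)" for v u
  have "(if E v u then 1 else 0) = lower v u + lower u v" for v u
    using dist_adj_neq[OF r, of v u] adj_sym[of v u] adj_sym[of u v]
    unfolding lower_def by auto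
  then have degree: "degree n E v = (\<Sum>u<n. lower v u + lower u v)" for v
    unfolding degree_def using card_filter_eq_sum[of "{..<n}" "E v"] by simp
  have "(\<Sum>u<n. lower v u) = (if v = r then 0 else 1)" if "v < n" for v
    using card_lower_neighbours[OF r that] card_filter_eq_sum[of "{..<n}"]
    unfolding lower_def neighbours_def by simp
  then have lower_sum: "(\<Sum>v<n. \<Sum>u<n. lower v u) = n - 1"
    using r by (simp add: sum.If_cases Diff_eq[symmetric])
  have "(\<Sum>v<n. degree n E v) = (\<Sum>v<n. \<Sum>u<n. lower v u) + (\<Sum>v<n. \<Sum>u<n. lower u v)"
    unfolding degree by (simp add: sum.distrib)
  also have "(\<Sum>v<n. \<Sum>u<n. lower u v) = (\<Sum>u<n. \<Sum>v<n. lower u v)"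
    by (rule sum.swap)
  finally show ?thesis
    using lower_sum by simp
qed simp

end

section \<open>Trees with three leaves\<close>

locale three_leaf_tree = tree_graph +
  fixes u1 u2 u3 m :: nat
  assumes pendants: "{v. pendant n E v} = {u1, u2, u3}"
    and distinct_pendants: "distinct [u1, u2, u3]"
    and major_m: "major n E m"
begin

lemma leaves_less: "u1 < n" "u2 < n" "u3 < n"
  using pendants unfolding pendant_def by blast+

lemma degree_leaves: "degree n E u1 = 1" "degree n E u2 = 1" "degree n E u3 = 1"
  using pendants unfolding pendant_def by blast+

lemma m_less: "m < n" and degree_m: "3 \<le> degree n E m"
  using major_m unfolding major_def by auto

lemma m_neq_leaves: "m \<noteq> u1" "m \<noteq> u2" "m \<noteq> u3"
  using degree_m degree_leaves by auto

lemma two_le_n: "2 \<le> n"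
proof -
  have "card (neighbours n E m) \<le> card {..<n}"
    by (rule card_mono) (auto simp: neighbours_def)
  then show ?thesis
    using degree_m unfolding degree_eq_card_neighbours by simp
qed

(* h bounds the degrees from below, yet its sum 2 n - 1 exceeds the degree sum 2 (n - 1). *)
lemma degree_le_2:
  assumes v: "v < n" "v \<noteq> m"
  shows "degree n E v \<le> 2"
proof (rule ccontr)
  assume "\<not> degree n E v \<le> 2"
  then have degree_v: "3 \<le> degree n E v"
    by simp
  define A where "A = {u1, u2, u3}"
  have "v \<notin> A" "m \<notin> A"
    using degree_v degree_leaves m_neq_leaves unfolding A_def by auto
  define h :: "nat \<Rightarrow> nat" where
    "h w = (if w \<in> A then 1 else if w = m \<or> w = v then 3 else 2)" for w
  have "h w \<le> degree n E w" if "w < n" for w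
  proof -
    have "w \<notin> A \<Longrightarrow> degree n E w \<noteq> 1"
      using pendants that unfolding A_def pendant_def by blast
    then show ?thesis
      unfolding h_def using degree_pos[OF _ that] two_le_n degree_v degree_m by force
  qed
  then have upper: "(\<Sum>w<n. h w) \<le> 2 * (n - 1)"
    using sum_mono[of "{..<n}" h "degree n E"] degree_sum by simp
  have pointwise:
    "h w + (if w \<in> A then 1 else 0) = 2 + (if w = m then 1 else 0) + (if w = v then 1 else 0)"
    for w
    unfolding h_def using \<open>v \<notin> A\<close> \<open>m \<notin> A\<close> v(2) by auto
  have "{w \<in> {..<n}. w \<in> A} = A"
    using leaves_less unfolding A_def by auto
  then have "(\<Sum>w<n. h w) + 3 = (\<Sum>w<n. h w) + (\<Sum>w<n. if w \<in> A then 1 else 0)"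
    using card_filter_eq_sum[of "{..<n}" "\<lambda>w. w \<in> A"] distinct_pendants
    unfolding A_def by simp
  also have "\<dots> = (\<Sum>w<n. 2 + (if w = m then 1 else 0) + (if w = v then 1 else 0))"
    unfolding sum.distrib[symmetric] pointwise ..
  also have "\<dots> = 2 * n + 2"
    using v(1) m_less by (simp only: sum.distrib) simp
  finally show False
    using upper two_le_n by simp
qed

definition leaf_path :: "nat list" where
  "leaf_path = (SOME p. geodesic p \<and> hd p = u1 \<and> last p = u2)"

abbreviation path_len :: nat where
  "path_len \<equiv> d u1 u2"

lemma leaf_path: "geodesic leaf_path" "hd leaf_path = u1" "last leaf_path = u2"
proof -
  have "\<exists>p. geodesic p \<and> hd p = u1 \<and> last p = u2"
    using geodesic_ex leaves_less by metis
  then have "geodesic leaf_path \<and> hd leaf_path = u1 \<and> last leaf_path = u2"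
    unfolding leaf_path_def by (rule someI_ex)
  then show "geodesic leaf_path" "hd leaf_path = u1" "last leaf_path = u2"
    by auto
qed

lemma length_leaf_path: "length leaf_path = Suc path_len"
  using leaf_path unfolding geodesic_def by simp

lemma leaf_path_dist: "i \<le> path_len \<Longrightarrow> d u1 (leaf_path ! i) = i"
  using geodesic_dist_nth[OF leaf_path(1)] leaf_path(2) length_leaf_path by simp

lemma leaf_path_ends: "leaf_path ! 0 = u1" "leaf_path ! path_len = u2"
proof -
  have "leaf_path \<noteq> []"
    using length_leaf_path by auto
  then show "leaf_path ! 0 = u1" "leaf_path ! path_len = u2"
    using leaf_path(2,3) length_leaf_path by (simp_all add: hd_conv_nth last_conv_nth)
qed

lemma leaf_path_less: "i \<le> path_len \<Longrightarrow> leaf_path ! i < n"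
  using leaf_path(1) length_leaf_path unfolding geodesic_def is_walk_def by simp

lemma leaf_path_index: "v \<in> set leaf_path \<Longrightarrow> d u1 v \<le> path_len \<and> leaf_path ! d u1 v = v"
  using leaf_path_dist length_leaf_path by (auto simp: in_set_conv_nth)

lemma path_len_pos: "0 < path_len"
  using leaf_path_ends distinct_pendants by (metis distinct_length_2_or_more neq0_conv)

lemma leaf_path_adj: "j < path_len \<Longrightarrow> E (leaf_path ! j) (leaf_path ! Suc j)"
  using leaf_path(1) length_leaf_path unfolding geodesic_def is_walk_def by simp

lemma leaf_path_adj_consecutive:
  assumes "j \<le> path_len" "k \<le> path_len" "E (leaf_path ! j) (leaf_path ! k)"
  shows "k = Suc j \<or> j = Suc k"
proof -
  have "k \<le> Suc j" "j \<le> Suc k" "j \<noteq> k"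
    using dist_adj_le[OF leaves_less(1) assms(3)] dist_adj_le[OF leaves_less(1) adj_sym[OF assms(3)]]
      dist_adj_neq[OF leaves_less(1) assms(3)] leaf_path_dist[OF assms(1)] leaf_path_dist[OF assms(2)]
    by simp_all
  then show ?thesis
    by linarith
qed

lemma leaf_path_pred_neq_succ: "0 < k \<Longrightarrow> k < path_len \<Longrightarrow> leaf_path ! (k - 1) \<noteq> leaf_path ! Suc k"
  using leaf_path_dist[of "k - 1"] leaf_path_dist[of "Suc k"] by fastforce

lemma neighbours_leaf_path_inter:
  assumes "0 < k" "k < path_len"
  shows "neighbours n E (leaf_path ! k) \<inter> set leaf_path = {leaf_path ! (k - 1), leaf_path ! Suc k}"
proof (intro equalityI subsetI)
  fix u
  assume "u \<in> neighbours n E (leaf_path ! k) \<inter> set leaf_path"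
  then have u: "u \<in> neighbours n E (leaf_path ! k)" "d u1 u \<le> path_len" "leaf_path ! d u1 u = u"
    using leaf_path_index by auto
  then have "d u1 u = Suc k \<or> d u1 u = k - 1"
    using leaf_path_adj_consecutive[of k "d u1 u"] assms unfolding neighbours_def by auto
  then show "u \<in> {leaf_path ! (k - 1), leaf_path ! Suc k}"
    using u(3) by auto
next
  fix u
  assume "u \<in> {leaf_path ! (k - 1), leaf_path ! Suc k}"
  then show "u \<in> neighbours n E (leaf_path ! k) \<inter> set leaf_path"
    using leaf_path_adj[of "k - 1"] leaf_path_adj[of k] leaf_path_less assms adj_sym length_leaf_path
    unfolding neighbours_def by auto
qed

lemma neighbours_leaf_path_interior:
  assumes "0 < k" "k < path_len" "leaf_path ! k \<noteq> m"
  shows "neighbours n E (leaf_path ! k) = {leaf_path ! (k - 1), leaf_path ! Suc k}"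
proof -
  have "card {leaf_path ! (k - 1), leaf_path ! Suc k} = 2"
    using leaf_path_pred_neq_succ assms by simp
  moreover have "card (neighbours n E (leaf_path ! k)) \<le> 2"
    using degree_le_2 leaf_path_less assms unfolding degree_eq_card_neighbours by simp
  ultimately show ?thesis
    using card_seteq[OF finite_neighbours] neighbours_leaf_path_inter[OF assms(1,2)]
    by (metis Int_lower1)
qed

lemma neighbours_u1: "neighbours n E u1 = {leaf_path ! 1}"
  using neighbours_leaf[OF degree_leaves(1)] leaf_path_adj[of 0] leaf_path_less path_len_pos leaf_path_ends
  unfolding neighbours_def by simp

lemma neighbours_u2: "neighbours n E u2 = {leaf_path ! (path_len - 1)}"
  using neighbours_leaf[OF degree_leaves(2)] leaf_path_adj[of "path_len - 1"] leaf_path_less path_len_pos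
    leaf_path_ends adj_sym
  unfolding neighbours_def by simp

lemma neighbours_subset_leaf_path:
  assumes "v \<in> set leaf_path" "v \<noteq> m"
  shows "neighbours n E v \<subseteq> set leaf_path"
proof -
  obtain k where k: "k \<le> path_len" "leaf_path ! k = v"
    using leaf_path_index assms(1) by blast
  have "leaf_path ! j \<in> set leaf_path" if "j \<le> path_len" for j
    using that length_leaf_path by simp
  then show ?thesis
    using k assms(2) neighbours_u1 neighbours_u2 neighbours_leaf_path_interior[of k] leaf_path_ends
      path_len_pos by (cases "k = 0"; cases "k = path_len") auto
qed

lemma m_in_leaf_path: "m \<in> set leaf_path"
proof (rule ccontr)
  assume m_notin: "m \<notin> set leaf_path"
  obtain w where w: "is_walk n E w" "hd w = u1" "last w = m"
    using connected leaves_less m_less unfolding connected_graph_def by blast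
  have "set w \<subseteq> set leaf_path"
  proof (rule set_walk_subset_closed[OF w(1)])
    show "hd w \<in> set leaf_path"
      using w(2) leaf_path(2) length_leaf_path by (metis hd_in_set list.size(3) nat.distinct(1))
    show "u \<in> set leaf_path" if "v \<in> set leaf_path" "E v u" for v u
      using neighbours_subset_leaf_path[OF that(1)] that m_notin adj_less
      unfolding neighbours_def by blast
  qed
  moreover have "last w \<in> set w"
    using w(1) unfolding is_walk_def by simp
  ultimately show False
    using w(3) m_notin by blast
qed

abbreviation m_pos :: nat where
  "m_pos \<equiv> d u1 m"

lemma m_pos_bounds: "0 < m_pos" "m_pos < path_len" and leaf_path_m_pos: "leaf_path ! m_pos = m"
proof -
  have "m_pos \<le> path_len" "leaf_path ! m_pos = m"
    using leaf_path_index[OF m_in_leaf_path] by auto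
  then show "0 < m_pos" "m_pos < path_len" "leaf_path ! m_pos = m"
    using leaf_path_ends m_neq_leaves by (metis gr0I, metis le_neq_implies_less, simp)
qed

lemma path_len_eq: "path_len = m_pos + d u2 m"
proof -
  have "d m u2 \<le> path_len - m_pos"
    using dist_le_walk[OF is_walk_drop[of _ _ leaf_path m_pos]] leaf_path(1,3) leaf_path_m_pos m_pos_bounds
      length_leaf_path unfolding geodesic_def by (simp add: hd_drop_conv_nth)
  moreover have "path_len \<le> m_pos + d m u2"
    using dist_triangle leaves_less m_less by blast
  ultimately show ?thesis
    using dist_sym leaves_less m_less m_pos_bounds by simp
qed

end

section \<open>The eigenvector\<close>

lemma laplacian_mult_vec_nth:
  assumes "v < n" "x \<in> carrier_vec n"
  shows "(laplacian n E *\<^sub>v x) $ v = real (degree n E v) * x $ v - (\<Sum>u\<in>neighbours n E v. x $ u)"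
proof -
  have "(laplacian n E *\<^sub>v x) $ v
      = (\<Sum>j<n. (if v = j then real (degree n E v) * x $ j else 0) - (if E v j then x $ j else 0))"
    using assms by (auto simp: laplacian_def scalar_prod_def lessThan_atLeast0 algebra_simps
        intro!: sum.cong)
  also have "\<dots> = real (degree n E v) * x $ v - (\<Sum>j\<in>{..<n} \<inter> {u. E v u}. x $ j)"
    using assms by (simp add: sum_subtractf sum.inter_restrict)
  also have "{..<n} \<inter> {u. E v u} = neighbours n E v"
    unfolding neighbours_def by auto
  finally show ?thesis .
qed

definition wave :: "nat \<Rightarrow> real" where
  "wave k = [1, 0, -1, -1, 0, 1] ! (k mod 6)"

lemma wave_0: "wave 0 = 1"
  unfolding wave_def by simp

lemma wave_Suc_Suc: "wave (Suc (Suc k)) = wave (Suc k) - wave k"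
proof -
  have "k mod 6 \<in> {0, 1, 2, 3, 4, 5}"
    by auto
  then show ?thesis
    unfolding wave_def by (auto simp: mod_Suc)
qed

lemma wave_eq_0: "k mod 3 = 1 \<Longrightarrow> wave k = 0"
proof -
  assume "k mod 3 = 1"
  then have "k mod 6 = 1 \<or> k mod 6 = 4"
    by presburger
  then show ?thesis
    unfolding wave_def by auto
qed

context three_leaf_tree
begin

definition eigvec :: "real vec" where
  "eigvec = vec n (\<lambda>v. if v \<in> set leaf_path then wave (d u1 v) else 0)"

lemma eigvec_carrier: "eigvec \<in> carrier_vec n"
  unfolding eigvec_def by simp

lemma eigvec_leaf_path: "k \<le> path_len \<Longrightarrow> eigvec $ (leaf_path ! k) = wave k"
  unfolding eigvec_def using leaf_path_less leaf_path_dist length_leaf_path by simp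

lemma eigvec_outside: "v < n \<Longrightarrow> v \<notin> set leaf_path \<Longrightarrow> eigvec $ v = 0"
  unfolding eigvec_def by simp

lemma sum_neighbours_eigvec:
  "(\<Sum>u\<in>neighbours n E v. eigvec $ u) = (\<Sum>u\<in>neighbours n E v \<inter> set leaf_path. eigvec $ u)"
  by (rule sum.mono_neutral_right) (auto simp: neighbours_def eigvec_outside)

context
  assumes m_pos_mod_3: "m_pos mod 3 = 1" and u2_mod_3: "d u2 m mod 3 = 1"
begin

lemma path_len_mod_3: "path_len mod 3 = 2"
  using path_len_eq m_pos_mod_3 u2_mod_3 by presburger

lemma wave_path_len_pred: "wave (path_len - 1) = 0"
proof -
  have "path_len = Suc (path_len - 1)"
    using path_len_pos by simp
  then have "(path_len - 1) mod 3 = 1"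
    using path_len_mod_3 mod_Suc[of "path_len - 1" 3] by (auto split: if_splits)
  then show ?thesis
    by (rule wave_eq_0)
qed

lemma eigvec_m: "eigvec $ m = 0"
  using eigvec_leaf_path[of m_pos] leaf_path_m_pos m_pos_bounds wave_eq_0[OF m_pos_mod_3] by simp

lemma sum_neighbours_eigvec_outside:
  assumes "v < n" "v \<notin> set leaf_path"
  shows "(\<Sum>u\<in>neighbours n E v. eigvec $ u) = 0"
proof -
  have "neighbours n E v \<inter> set leaf_path \<subseteq> {m}"
  proof
    fix u
    assume u: "u \<in> neighbours n E v \<inter> set leaf_path"
    then have "v \<in> neighbours n E u"
      using assms(1) adj_sym unfolding neighbours_def by auto
    then show "u \<in> {m}"
      using neighbours_subset_leaf_path u assms(2) by blast
  qed
  then have "neighbours n E v \<inter> set leaf_path = {} \<or> neighbours n E v \<inter> set leaf_path = {m}"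
    by blast
  then show ?thesis
    using sum_neighbours_eigvec eigvec_m by auto
qed

lemma sum_neighbours_eigvec_interior:
  assumes "0 < k" "k < path_len"
  shows "(\<Sum>u\<in>neighbours n E (leaf_path ! k). eigvec $ u) = wave k"
proof -
  have "(\<Sum>u\<in>neighbours n E (leaf_path ! k). eigvec $ u) = wave (k - 1) + wave (Suc k)"
    using sum_neighbours_eigvec neighbours_leaf_path_inter[OF assms] eigvec_leaf_path
      leaf_path_pred_neq_succ[OF assms] assms by simp
  also have "\<dots> = wave k"
    using wave_Suc_Suc[of "k - 1"] assms by simp
  finally show ?thesis .
qed

lemma degree_leaf_path_interior:
  assumes "0 < k" "k < path_len"
  shows "degree n E (leaf_path ! k) = 2 \<or> wave k = 0"
proof (cases "leaf_path ! k = m")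
  case True
  then have "k = m_pos"
    using leaf_path_dist[of k] assms by simp
  then show ?thesis
    using wave_eq_0[OF m_pos_mod_3] by simp
next
  case False
  then show ?thesis
    using neighbours_leaf_path_interior[OF assms False] leaf_path_pred_neq_succ[OF assms]
    unfolding degree_eq_card_neighbours by simp
qed

lemma eigvec_equation:
  assumes "v < n"
  shows "real (degree n E v) * eigvec $ v - (\<Sum>u\<in>neighbours n E v. eigvec $ u) = eigvec $ v"
proof (cases "v \<in> set leaf_path")
  case False
  then show ?thesis
    using sum_neighbours_eigvec_outside eigvec_outside assms by simp
next
  case True
  then obtain k where k: "k \<le> path_len" "leaf_path ! k = v"
    using leaf_path_index by blast
  consider "k = 0" | "k = path_len" | "0 < k" "k < path_len"
    using k(1) by linarith
  then show ?thesis
  proof cases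
    case 1
    then show ?thesis
      using k neighbours_u1 degree_leaves(1) eigvec_leaf_path[of 1] wave_eq_0[of 1] path_len_pos
        leaf_path_ends by simp
  next
    case 2
    then show ?thesis
      using k neighbours_u2 degree_leaves(2) eigvec_leaf_path[of "path_len - 1"] wave_path_len_pred
        leaf_path_ends by simp
  next
    case 3
    have "degree n E v = 2 \<or> wave k = 0"
      using degree_leaf_path_interior[OF 3] k(2) by simp
    moreover have "eigvec $ v = wave k"
      using eigvec_leaf_path[OF k(1)] k(2) by simp
    moreover have "(\<Sum>u\<in>neighbours n E v. eigvec $ u) = wave k"
      using sum_neighbours_eigvec_interior[OF 3] k(2) by simp
    ultimately show ?thesis
      by auto
  qed
qed

theorem laplacian_eigenvalue_1: "eigenvalue (laplacian n E) 1"
proof -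
  have dim: "dim_row (laplacian n E) = n"
    unfolding laplacian_def by simp
  have "eigvec $ u1 = 1"
    using eigvec_leaf_path[of 0] leaf_path_ends wave_0 by simp
  then have "eigvec \<noteq> 0\<^sub>v n"
    using leaves_less by auto
  moreover have "laplacian n E *\<^sub>v eigvec = 1 \<cdot>\<^sub>v eigvec"
  proof (rule eq_vecI)
    fix i
    assume "i < dim_vec (1 \<cdot>\<^sub>v eigvec)"
    then have "i < n"
      using eigvec_carrier by simp
    then show "(laplacian n E *\<^sub>v eigvec) $ i = (1 \<cdot>\<^sub>v eigvec) $ i"
      using laplacian_mult_vec_nth[OF _ eigvec_carrier] eigvec_equation eigvec_carrier by simp
  qed (use dim eigvec_carrier in simp)
  ultimately show ?thesis
    unfolding eigenvalue_def eigenvector_def using eigvec_carrier dim by auto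
qed

end

end

theorem mainTheorem4:
  fixes n :: nat and E :: "nat \<Rightarrow> nat \<Rightarrow> bool" and u1 u2 u3 m :: nat
  assumes "is_tree n E"
    and "{v. pendant n E v} = {u1, u2, u3}"
    and "distinct [u1, u2, u3]"
    and "major n E m"
    and "dist_graph n E u1 m mod 3 = 1"
    and "dist_graph n E u2 m mod 3 = 1"
  shows "eigenvalue (laplacian n E) 1"
proof -
  interpret three_leaf_tree n E u1 u2 u3 m
    using assms(1-4) unfolding is_tree_def by unfold_locales auto
  show ?thesis
    using laplacian_eigenvalue_1 assms(5,6) by blast
qed

end
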